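(* For each $n\in\mathbb{N}$, the $\mathbb{Z}$-linear map $\mathbf{f}_n:QSymm\to QSymm$ given on compositions by $\mathbf{f}_n([a_1,\dots,a_m])=[na_1,\dots,na_m]$ is a Hopf algebra endomorphism of $QSymm$; $\mathbf{f}_1=\mathrm{id}$, $\mathbf{f}_n\mathbf{f}_m=\mathbf{f}_{nm}$; $\mathbf{f}_n$ maps the subring $Symm\subset QSymm$ of symmetric functions into itself, where it acts as the Frobenius operator determined by $\mathbf{f}_n(p_k)=p_{nk}$ on the power sums $p_k=\sum_i X_i^k$; and for every prime $p$ and every $x\in QSymm$, $\mathbf{f}_p(x)\equiv x^p \pmod{p\,QSymm}$. *)

theory Defs
  imports "HOL-Library.Poly_Mapping" "HOL-Computational_Algebra.Primes"
begin

text \<open>QSymm over the integers, modelled as the free abelian group on compositions,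
  an element being its expansion in the monomial quasisymmetric basis M_alpha.\<close>

type_synonym qsym = "nat list \<Rightarrow>\<^sub>0 int"
type_synonym qsym2 = "(nat list \<times> nat list) \<Rightarrow>\<^sub>0 int"   \<comment> \<open>QSymm tensor QSymm\<close>

definition is_composition :: "nat list \<Rightarrow> bool" where
  "is_composition a \<longleftrightarrow> 0 \<notin> set a"

definition in_QSymm :: "qsym \<Rightarrow> bool" where
  "in_QSymm x \<longleftrightarrow> (\<forall>a \<in> Poly_Mapping.keys x. is_composition a)"

definition in_QSymm2 :: "qsym2 \<Rightarrow> bool" where
  "in_QSymm2 t \<longleftrightarrow> (\<forall>(a,b) \<in> Poly_Mapping.keys t. is_composition a \<and> is_composition b)"

fun qshuffle :: "nat list \<Rightarrow> nat list \<Rightarrow> qsym" where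
  "qshuffle [] b = frag_of b"
| "qshuffle a [] = frag_of a"
| "qshuffle (x # a) (y # b) =
     frag_extend (\<lambda>c. frag_of (x # c)) (qshuffle a (y # b))
   + frag_extend (\<lambda>c. frag_of (y # c)) (qshuffle (x # a) b)
   + frag_extend (\<lambda>c. frag_of ((x + y) # c)) (qshuffle a b)"

definition qone :: qsym where "qone = frag_of []"

definition qmult :: "qsym \<Rightarrow> qsym \<Rightarrow> qsym" where
  "qmult x y = frag_extend (\<lambda>a. frag_extend (\<lambda>b. qshuffle a b) y) x"

fun qpow :: "qsym \<Rightarrow> nat \<Rightarrow> qsym" where
  "qpow x 0 = qone"
| "qpow x (Suc k) = qmult x (qpow x k)"

definition qcoprod :: "qsym \<Rightarrow> qsym2" where
  "qcoprod x = frag_extend (\<lambda>a. \<Sum>i\<in>{0..length a}. frag_of (take i a, drop i a)) x"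

definition qcounit :: "qsym \<Rightarrow> int" where
  "qcounit x = Poly_Mapping.lookup x []"

definition qtensor :: "qsym \<Rightarrow> qsym \<Rightarrow> qsym2" where
  "qtensor u v = frag_extend (\<lambda>a. frag_extend (\<lambda>b. frag_of (a, b)) v) u"

definition tensor_map :: "(qsym \<Rightarrow> qsym) \<Rightarrow> qsym2 \<Rightarrow> qsym2" where
  "tensor_map f t = frag_extend (\<lambda>(a, b). qtensor (f (frag_of a)) (f (frag_of b))) t"

text \<open>Hopf algebra (= bialgebra) endomorphism of QSymm: a Z-linear map QSymm to QSymm
  preserving unit, product, coproduct and counit.\<close>
definition hopf_endo :: "(qsym \<Rightarrow> qsym) \<Rightarrow> bool" where
  "hopf_endo f \<longleftrightarrow>
     (\<forall>x. in_QSymm x \<longrightarrow> in_QSymm (f x))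
   \<and> (\<forall>x y. in_QSymm x \<longrightarrow> in_QSymm y \<longrightarrow> f (x + y) = f x + f y)
   \<and> (\<forall>c x. in_QSymm x \<longrightarrow> f (frag_cmul c x) = frag_cmul c (f x))
   \<and> f qone = qone
   \<and> (\<forall>x y. in_QSymm x \<longrightarrow> in_QSymm y \<longrightarrow> f (qmult x y) = qmult (f x) (f y))
   \<and> (\<forall>x. in_QSymm x \<longrightarrow> qcoprod (f x) = tensor_map f (qcoprod x))
   \<and> (\<forall>x. in_QSymm x \<longrightarrow> qcounit (f x) = qcounit x)"

definition frob :: "nat \<Rightarrow> qsym \<Rightarrow> qsym" where
  "frob n x = frag_extend (\<lambda>a. frag_of (map (\<lambda>ai. n * ai) a)) x"

text \<open>Symm inside QSymm: quasisymmetric functions whose M-coefficients are invariant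
  under rearrangement of the composition (i.e. integer combinations of the
  monomial symmetric functions m_lambda).\<close>
definition in_Symm :: "qsym \<Rightarrow> bool" where
  "in_Symm x \<longleftrightarrow> in_QSymm x \<and> (\<forall>a b. mset a = mset b \<longrightarrow> Poly_Mapping.lookup x a = Poly_Mapping.lookup x b)"

text \<open>Power sum p_k = sum_i X_i^k = M_[k].\<close>
definition psum :: "nat \<Rightarrow> qsym" where
  "psum k = frag_of [k]"

definition divisible_by :: "nat \<Rightarrow> qsym \<Rightarrow> bool" where
  "divisible_by p z \<longleftrightarrow> (\<forall>a. int p dvd Poly_Mapping.lookup z a)"

end

theory Submission
  imports Defs
begin

text \<open>The maps f_n are Hopf endomorphisms because multiplying every part of a composition
  by n commutes with quasi-shuffling and with deconcatenation.
  For the congruence, evaluate QSymm in the polynomial ring Z[X_0, ..., X_(N-1)], sending M_a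
  to the sum of X_(i_1)^(a_1) ... X_(i_m)^(a_m) over all i_1 < ... < i_m. This is a ring
  homomorphism, and it sends f_p(M_a) to M_a(X_0^p, ..., X_(N-1)^p), which is congruent to
  M_a^p modulo p by the freshman's dream. For N >= m the coefficient of
  X_0^(a_1) ... X_(m-1)^(a_m) in the image of x is the coefficient of M_a in x, so every
  coefficient of f_p(x) - x^p is divisible by p.\<close>

section \<open>Congruences modulo an integer in a commutative ring\<close>

definition ring_cong :: "nat \<Rightarrow> 'a::comm_ring_1 \<Rightarrow> 'a \<Rightarrow> bool" where
  "ring_cong p a b \<longleftrightarrow> of_nat p dvd a - b"

lemma ring_cong_refl [simp]: "ring_cong p a a"
  by (simp add: ring_cong_def)

lemma ring_cong_sym: "ring_cong p a b \<Longrightarrow> ring_cong p b a"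
  unfolding ring_cong_def by (metis dvd_minus_iff minus_diff_eq)

lemma ring_cong_trans [trans]: "ring_cong p a b \<Longrightarrow> ring_cong p b c \<Longrightarrow> ring_cong p a c"
  unfolding ring_cong_def by (drule (1) dvd_add) simp

lemma ring_cong_add: "ring_cong p a b \<Longrightarrow> ring_cong p c d \<Longrightarrow> ring_cong p (a + c) (b + d)"
  unfolding ring_cong_def by (drule (1) dvd_add) (simp add: algebra_simps)

lemma ring_cong_diff: "ring_cong p a b \<Longrightarrow> ring_cong p c d \<Longrightarrow> ring_cong p (a - c) (b - d)"
  unfolding ring_cong_def by (drule (1) dvd_diff) (simp add: algebra_simps)

lemma ring_cong_mult: "ring_cong p a b \<Longrightarrow> ring_cong p c d \<Longrightarrow> ring_cong p (a * c) (b * d)"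
proof -
  assume "ring_cong p a b" "ring_cong p c d"
  then have "of_nat p dvd (a - b) * c + b * (c - d)"
    unfolding ring_cong_def by (intro dvd_add dvd_mult dvd_mult2)
  then show ?thesis
    by (simp add: ring_cong_def algebra_simps)
qed

lemma ring_cong_sum: "(\<And>i. i \<in> A \<Longrightarrow> ring_cong p (f i) (g i)) \<Longrightarrow> ring_cong p (sum f A) (sum g A)"
  by (induction A rule: infinite_finite_induct) (auto intro: ring_cong_add)

lemma freshmans_dream_cong:
  fixes x y :: "'a::comm_ring_1"
  assumes "prime p"
  shows "ring_cong p ((x + y) ^ p) (x ^ p + y ^ p)"
proof -
  let ?t = "\<lambda>k. of_nat (p choose k) * x ^ k * y ^ (p - k) :: 'a"
  have "p > 0"
    using assms prime_gt_0_nat by blast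
  have "(x + y) ^ p = (\<Sum>k\<le>p. ?t k)"
    by (rule binomial_ring)
  also have "\<dots> = (\<Sum>k\<in>{0, p}. ?t k) + (\<Sum>k\<in>{..p} - {0, p}. ?t k)"
    by (subst sum.subset_diff[of "{0, p}"]) auto
  also have "(\<Sum>k\<in>{0, p}. ?t k) = x ^ p + y ^ p"
    using \<open>p > 0\<close> by (simp add: add.commute)
  finally have expand: "(x + y) ^ p - (x ^ p + y ^ p) = (\<Sum>k\<in>{..p} - {0, p}. ?t k)"
    by simp
  have "of_nat p dvd (\<Sum>k\<in>{..p} - {0, p}. ?t k)"
  proof (rule dvd_sum)
    fix k assume "k \<in> {..p} - {0, p}"
    then have "p dvd p choose k"
      using assms by (intro dvd_choose_prime) auto
    then obtain q where "p choose k = p * q" ..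
    then show "of_nat p dvd ?t k"
      by (simp add: mult.assoc)
  qed
  then show ?thesis
    by (simp add: ring_cong_def expand)
qed

lemma freshmans_dream_diff_cong:
  fixes x y :: "'a::comm_ring_1"
  assumes "prime p"
  shows "ring_cong p ((x - y) ^ p) (x ^ p - y ^ p)"
proof -
  have "ring_cong p (((x - y) + y) ^ p - y ^ p) ((x - y) ^ p + y ^ p - y ^ p)"
    using freshmans_dream_cong[OF assms] by (rule ring_cong_diff) simp
  then show ?thesis
    by (simp add: ring_cong_sym)
qed

lemma freshmans_dream_sum_cong:
  fixes f :: "'b \<Rightarrow> 'a::comm_ring_1"
  assumes "prime p"
  shows "ring_cong p (sum f A ^ p) (\<Sum>i\<in>A. f i ^ p)"
proof (induction A rule: infinite_finite_induct)
  case (insert i A)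
  have "ring_cong p ((f i + sum f A) ^ p) (f i ^ p + sum f A ^ p)"
    by (rule freshmans_dream_cong[OF assms])
  also have "ring_cong p (f i ^ p + sum f A ^ p) (f i ^ p + (\<Sum>i\<in>A. f i ^ p))"
    using insert.IH by (rule ring_cong_add[OF ring_cong_refl])
  finally show ?case
    using insert.hyps by simp
qed (use assms prime_gt_0_nat in \<open>simp_all add: power_0_left\<close>)

lemma frag_extend_frag_extend:
  "frag_extend g (frag_extend f x) = frag_extend (\<lambda>a. frag_extend g (f a)) x"
  using subset_UNIV by (induction x rule: frag_induction) (auto simp: frag_extend_diff)

lemma frag_extend_mult_left:
  fixes f :: "'b \<Rightarrow> ('a::comm_monoid_add \<Rightarrow>\<^sub>0 int)"
  shows "frag_extend (\<lambda>b. c * f b) y = c * frag_extend f y"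
  using subset_UNIV
  by (induction y rule: frag_induction) (auto simp: frag_extend_diff right_diff_distrib)

lemma frag_extend_mult_right:
  fixes f :: "'b \<Rightarrow> ('a::comm_monoid_add \<Rightarrow>\<^sub>0 int)"
  shows "frag_extend (\<lambda>b. f b * c) y = frag_extend f y * c"
  using frag_extend_mult_left[of c f y] by (simp add: mult.commute)

lemma lookup_frag_extend:
  "Poly_Mapping.lookup (frag_extend f x) m =
     (\<Sum>b\<in>Poly_Mapping.keys x. Poly_Mapping.lookup x b * Poly_Mapping.lookup (f b) m)"
  by (simp add: frag_extend_def lookup_sum)

lemma ring_cong_frag_extend:
  fixes f g :: "'b \<Rightarrow> ('a::comm_monoid_add \<Rightarrow>\<^sub>0 int)"
  assumes "\<And>a. ring_cong p (f a) (g a)"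
  shows "ring_cong p (frag_extend f x) (frag_extend g x)"
  using subset_UNIV
  by (induction x rule: frag_induction) (auto simp: frag_extend_diff assms intro: ring_cong_diff)

lemma frag_extend_power_cong:
  fixes g :: "'b \<Rightarrow> ('a::comm_monoid_add \<Rightarrow>\<^sub>0 int)"
  assumes "prime p"
  shows "ring_cong p (frag_extend g x ^ p) (frag_extend (\<lambda>a. g a ^ p) x)"
  using subset_UNIV
proof (induction x rule: frag_induction)
  case zero
  then show ?case
    using assms prime_gt_0_nat by (simp add: power_0_left)
next
  case (diff a b)
  have "ring_cong p ((frag_extend g a - frag_extend g b) ^ p) (frag_extend g a ^ p - frag_extend g b ^ p)"
    by (rule freshmans_dream_diff_cong[OF assms])
  also have "ring_cong p \<dots> (frag_extend (\<lambda>a. g a ^ p) a - frag_extend (\<lambda>a. g a ^ p) b)"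
    using diff.IH by (rule ring_cong_diff)
  finally show ?case
    by (simp add: frag_extend_diff)
qed simp

lemma in_QSymm_frag_of: "in_QSymm (frag_of a) \<longleftrightarrow> is_composition a"
  by (simp add: in_QSymm_def)

lemma in_QSymm_qone: "in_QSymm qone"
  by (simp add: qone_def in_QSymm_frag_of is_composition_def)

lemma in_QSymm_add: "in_QSymm x \<Longrightarrow> in_QSymm y \<Longrightarrow> in_QSymm (x + y)"
  unfolding in_QSymm_def using keys_add[of x y] by blast

lemma in_QSymm_diff: "in_QSymm x \<Longrightarrow> in_QSymm y \<Longrightarrow> in_QSymm (x - y)"
  unfolding in_QSymm_def using keys_diff[of x y] by blast

lemma in_QSymm_frag_extend:
  "(\<And>a. a \<in> Poly_Mapping.keys x \<Longrightarrow> in_QSymm (f a)) \<Longrightarrow> in_QSymm (frag_extend f x)"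
  unfolding in_QSymm_def using keys_frag_extend[of f x] by blast

lemma in_QSymm_Cons:
  "z \<noteq> 0 \<Longrightarrow> in_QSymm u \<Longrightarrow> in_QSymm (frag_extend (\<lambda>c. frag_of (z # c)) u)"
  by (intro in_QSymm_frag_extend) (auto simp: in_QSymm_def is_composition_def)

lemma in_QSymm_qshuffle:
  "is_composition a \<Longrightarrow> is_composition b \<Longrightarrow> in_QSymm (qshuffle a b)"
proof (induction a b rule: qshuffle.induct)
  case (3 x a y b)
  then have "x \<noteq> 0" "y \<noteq> 0" "is_composition a" "is_composition b"
    by (auto simp: is_composition_def)
  with 3 show ?case
    by (auto simp: is_composition_def intro!: in_QSymm_add in_QSymm_Cons)
qed (simp_all add: in_QSymm_frag_of)

lemma in_QSymm_qmult: "in_QSymm x \<Longrightarrow> in_QSymm y \<Longrightarrow> in_QSymm (qmult x y)"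
  unfolding qmult_def
  by (intro in_QSymm_frag_extend in_QSymm_qshuffle) (auto simp: in_QSymm_def)

lemma in_QSymm_qpow: "in_QSymm x \<Longrightarrow> in_QSymm (qpow x n)"
  by (induction n) (simp_all add: in_QSymm_qone in_QSymm_qmult)

section \<open>Evaluation in finitely many variables\<close>

type_synonym mpoly = "(nat \<Rightarrow>\<^sub>0 nat) \<Rightarrow>\<^sub>0 int"

definition Xpow :: "nat \<Rightarrow> nat \<Rightarrow> mpoly" where
  "Xpow i e = Poly_Mapping.single (Poly_Mapping.single i e) 1"

text \<open>\<^term>\<open>Mpoly k N a\<close> is M_a(X_k, ..., X_(N-1)), the sum of
  X_(i_1)^(a_1) ... X_(i_m)^(a_m) over k <= i_1 < ... < i_m < N.\<close>

fun Mpoly :: "nat \<Rightarrow> nat \<Rightarrow> nat list \<Rightarrow> mpoly" where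
  "Mpoly k N [] = 1"
| "Mpoly k N (e # a) = (\<Sum>i\<in>{k..<N}. Xpow i e * Mpoly (Suc i) N a)"

definition qsym_eval :: "nat \<Rightarrow> nat \<Rightarrow> qsym \<Rightarrow> mpoly" where
  "qsym_eval k N = frag_extend (Mpoly k N)"

lemma Xpow_mult: "Xpow i e * Xpow i f = Xpow i (e + f)"
  by (simp add: Xpow_def mult_single single_add)

lemma Xpow_power: "Xpow i e ^ n = Xpow i (n * e)"
  by (induction n) (simp_all add: Xpow_def Xpow_mult[unfolded Xpow_def] add.commute)

lemma qsym_eval_frag_of [simp]: "qsym_eval k N (frag_of a) = Mpoly k N a"
  by (simp add: qsym_eval_def)

lemma qsym_eval_add: "qsym_eval k N (x + y) = qsym_eval k N x + qsym_eval k N y"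
  by (simp add: qsym_eval_def frag_extend_add)

lemma qsym_eval_diff: "qsym_eval k N (x - y) = qsym_eval k N x - qsym_eval k N y"
  by (simp add: qsym_eval_def frag_extend_diff)

lemma qsym_eval_Cons:
  "qsym_eval k N (frag_extend (\<lambda>c. frag_of (e # c)) z) = (\<Sum>i\<in>{k..<N}. Xpow i e * qsym_eval (Suc i) N z)"
  unfolding qsym_eval_def using subset_UNIV
  by (induction z rule: frag_induction) (auto simp: frag_extend_diff right_diff_distrib sum_subtractf)

text \<open>The three parts of this splitting of a product of two sums correspond to the three
  terms of the quasi-shuffle recursion.\<close>

lemma sum_square_split_diagonal:
  fixes f :: "nat \<Rightarrow> nat \<Rightarrow> 'a::comm_monoid_add"
  shows "(\<Sum>i\<in>{k..<N}. \<Sum>j\<in>{k..<N}. f i j) =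
    (\<Sum>i\<in>{k..<N}. \<Sum>j\<in>{Suc i..<N}. f i j) + (\<Sum>j\<in>{k..<N}. \<Sum>i\<in>{Suc j..<N}. f i j)
    + (\<Sum>i\<in>{k..<N}. f i i)"
proof (cases "k \<le> N")
  case True
  then show ?thesis
  proof (induction k rule: inc_induct)
    case (step n)
    have split: "{n..<N} = insert n {Suc n..<N}"
      using step by auto
    show ?case
      by (simp add: split sum.distrib step.IH add_ac)
  qed simp
qed simp

lemma qsym_eval_qshuffle: "qsym_eval k N (qshuffle a b) = Mpoly k N a * Mpoly k N b"
proof (induction a b arbitrary: k rule: qshuffle.induct)
  case (3 x a y b)
  define A where "A i = Xpow i x * Mpoly (Suc i) N a" for i
  define B where "B j = Xpow j y * Mpoly (Suc j) N b" for j
  have "qsym_eval k N (qshuffle (x # a) (y # b)) =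
      (\<Sum>i\<in>{k..<N}. Xpow i x * (Mpoly (Suc i) N a * Mpoly (Suc i) N (y # b)))
    + (\<Sum>i\<in>{k..<N}. Xpow i y * (Mpoly (Suc i) N (x # a) * Mpoly (Suc i) N b))
    + (\<Sum>i\<in>{k..<N}. Xpow i (x + y) * (Mpoly (Suc i) N a * Mpoly (Suc i) N b))"
    by (simp add: qsym_eval_add qsym_eval_Cons 3)
  also have "\<dots> = (\<Sum>i\<in>{k..<N}. \<Sum>j\<in>{Suc i..<N}. A i * B j)
    + (\<Sum>j\<in>{k..<N}. \<Sum>i\<in>{Suc j..<N}. A i * B j) + (\<Sum>i\<in>{k..<N}. A i * B i)"
    by (simp add: A_def B_def sum_distrib_left sum_distrib_right Xpow_mult[symmetric] mult_ac)
  also have "\<dots> = (\<Sum>i\<in>{k..<N}. \<Sum>j\<in>{k..<N}. A i * B j)"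
    by (rule sum_square_split_diagonal[symmetric])
  also have "\<dots> = Mpoly k N (x # a) * Mpoly k N (y # b)"
    by (simp add: A_def B_def sum_product)
  finally show ?case .
qed simp_all

lemma qsym_eval_qmult: "qsym_eval k N (qmult x y) = qsym_eval k N x * qsym_eval k N y"
proof -
  have "qsym_eval k N (qmult x y) = frag_extend (\<lambda>a. frag_extend (\<lambda>b. Mpoly k N a * Mpoly k N b) y) x"
    unfolding qmult_def qsym_eval_def
    by (simp add: frag_extend_frag_extend qsym_eval_qshuffle[unfolded qsym_eval_def])
  also have "\<dots> = qsym_eval k N x * qsym_eval k N y"
    by (simp add: qsym_eval_def frag_extend_mult_left frag_extend_mult_right)
  finally show ?thesis .
qed

lemma qsym_eval_qpow: "qsym_eval k N (qpow x n) = qsym_eval k N x ^ n"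
  by (induction n) (simp_all add: qone_def qsym_eval_qmult)

lemma Mpoly_scale_cong:
  assumes "prime p"
  shows "ring_cong p (Mpoly k N (map ((*) p) a)) (Mpoly k N a ^ p)"
proof (induction a arbitrary: k)
  case (Cons e a)
  have "Mpoly k N (map ((*) p) (e # a)) = (\<Sum>i\<in>{k..<N}. Xpow i (p * e) * Mpoly (Suc i) N (map ((*) p) a))"
    by simp
  also have "ring_cong p \<dots> (\<Sum>i\<in>{k..<N}. Xpow i (p * e) * Mpoly (Suc i) N a ^ p)"
    using Cons.IH by (intro ring_cong_sum ring_cong_mult ring_cong_refl)
  also have "\<dots> = (\<Sum>i\<in>{k..<N}. (Xpow i e * Mpoly (Suc i) N a) ^ p)"
    by (simp add: power_mult_distrib Xpow_power)
  also have "ring_cong p \<dots> (Mpoly k N (e # a) ^ p)"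
    unfolding Mpoly.simps by (rule ring_cong_sym, rule freshmans_dream_sum_cong[OF assms])
  finally show ?case .
qed simp

lemma qsym_eval_frob_cong:
  assumes "prime p"
  shows "ring_cong p (qsym_eval k N (frob p x)) (qsym_eval k N x ^ p)"
proof -
  have "qsym_eval k N (frob p x) = frag_extend (\<lambda>a. Mpoly k N (map ((*) p) a)) x"
    unfolding frob_def qsym_eval_def by (simp add: frag_extend_frag_extend)
  also have "ring_cong p \<dots> (frag_extend (\<lambda>a. Mpoly k N a ^ p) x)"
    by (intro ring_cong_frag_extend Mpoly_scale_cong assms)
  also have "ring_cong p \<dots> (qsym_eval k N x ^ p)"
    unfolding qsym_eval_def by (rule ring_cong_sym, rule frag_extend_power_cong[OF assms])
  finally show ?thesis .
qed

section \<open>Recovering coefficients from the evaluation\<close>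

fun consecutive_monomial :: "nat \<Rightarrow> nat list \<Rightarrow> (nat \<Rightarrow>\<^sub>0 nat)" where
  "consecutive_monomial k [] = 0"
| "consecutive_monomial k (e # a) = Poly_Mapping.single k e + consecutive_monomial (Suc k) a"

lemma lookup_consecutive_monomial_below:
  "j < k \<Longrightarrow> Poly_Mapping.lookup (consecutive_monomial k a) j = 0"
  by (induction a arbitrary: k) (auto simp: lookup_add lookup_single)

lemma lookup_consecutive_monomial_first:
  "Poly_Mapping.lookup (consecutive_monomial k (e # a)) k = e"
  by (simp add: lookup_add lookup_consecutive_monomial_below)

lemma consecutive_monomial_eq_0_iff:
  assumes "is_composition a"
  shows "consecutive_monomial k a = 0 \<longleftrightarrow> a = []"
proof (cases a)
  case (Cons e a')
  then have "Poly_Mapping.lookup (consecutive_monomial k a) k \<noteq> 0"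
    using assms by (simp only: lookup_consecutive_monomial_first) (simp add: is_composition_def)
  with Cons show ?thesis
    by auto
qed simp

lemma keys_Xpow_mult:
  "m \<in> Poly_Mapping.keys (Xpow i e * f) \<Longrightarrow> \<exists>q\<in>Poly_Mapping.keys f. m = Poly_Mapping.single i e + q"
  using keys_mult[of "Xpow i e" f] by (auto simp: Xpow_def)

lemma lookup_Xpow_mult:
  "Poly_Mapping.lookup (Xpow i e * f) (Poly_Mapping.single i e + q) = Poly_Mapping.lookup f q"
proof -
  have "Poly_Mapping.lookup (Xpow i e * f) (Poly_Mapping.single i e + q)
      = (\<Sum>q'. Poly_Mapping.lookup f q' when Poly_Mapping.single i e + q = Poly_Mapping.single i e + q')"
    unfolding Xpow_def lookup_mult lookup_single by (simp add: when_mult Sum_any_when_equal')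
  also have "\<dots> = (\<Sum>q'. Poly_Mapping.lookup f q' when q' = q)"
    by (rule Sum_any.cong) (auto simp: when_def)
  finally show ?thesis
    by simp
qed

lemma keys_Mpoly_below:
  "m \<in> Poly_Mapping.keys (Mpoly k N b) \<Longrightarrow> j < k \<Longrightarrow> Poly_Mapping.lookup m j = 0"
proof (induction b arbitrary: k m)
  case (Cons e b)
  obtain i where "i \<in> {k..<N}" and "m \<in> Poly_Mapping.keys (Xpow i e * Mpoly (Suc i) N b)"
    using Cons.prems(1) keys_sum by fastforce
  then obtain q where "q \<in> Poly_Mapping.keys (Mpoly (Suc i) N b)" "m = Poly_Mapping.single i e + q"
    using keys_Xpow_mult by blast
  with \<open>i \<in> {k..<N}\<close> Cons show ?case
    by (simp add: lookup_add lookup_single)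
qed simp

text \<open>Every monomial of the summand of index i of \<^term>\<open>Mpoly k N (e # b)\<close> has
  exponent e at X_i and exponent 0 at all variables below X_i, so it can only be of the form
  X_k^(a_1) X_(k+1)^(a_2) ... if i = k and a_1 = e.\<close>

lemma lookup_Mpoly_summand_consecutive_monomial:
  assumes "is_composition a" "e > 0" "k \<le> i"
    and "Poly_Mapping.lookup (Xpow i e * Mpoly (Suc i) N b) (consecutive_monomial k a) \<noteq> 0"
  obtains a' where "a = e # a'" "i = k"
    "Poly_Mapping.lookup (Xpow i e * Mpoly (Suc i) N b) (consecutive_monomial k a)
       = Poly_Mapping.lookup (Mpoly (Suc k) N b) (consecutive_monomial (Suc k) a')"
proof -
  let ?m = "consecutive_monomial k a"
  obtain q where q: "q \<in> Poly_Mapping.keys (Mpoly (Suc i) N b)" "?m = Poly_Mapping.single i e + q"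
    using keys_Xpow_mult assms(4) by (metis in_keys_iff)
  have "Poly_Mapping.lookup ?m i = e + Poly_Mapping.lookup q i"
    using q(2) by (simp add: lookup_add)
  then have "a \<noteq> []"
    using \<open>e > 0\<close> by auto
  then obtain z a' where a: "a = z # a'"
    by (cases a) auto
  have "z = Poly_Mapping.lookup ?m k"
    by (simp only: a lookup_consecutive_monomial_first)
  also have "\<dots> = (if i = k then e else 0)"
    using q keys_Mpoly_below[of q "Suc i" N b k] \<open>k \<le> i\<close> by (simp add: lookup_add lookup_single)
  finally have "i = k" "z = e"
    using assms(1) a by (auto simp: is_composition_def split: if_splits)
  with a that show ?thesis
    by (simp add: lookup_Xpow_mult)
qed

lemma lookup_Mpoly_consecutive_monomial:
  assumes "is_composition a" "is_composition b" "k + length a \<le> N"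
  shows "Poly_Mapping.lookup (Mpoly k N b) (consecutive_monomial k a) = (if a = b then 1 else 0)"
  using assms
proof (induction b arbitrary: k a)
  case Nil
  then show ?case
    by (simp add: lookup_one when_def consecutive_monomial_eq_0_iff)
next
  case (Cons e b)
  let ?term = "\<lambda>i. Poly_Mapping.lookup (Xpow i e * Mpoly (Suc i) N b) (consecutive_monomial k a)"
  have "e > 0" "is_composition b"
    using Cons.prems(2) by (auto simp: is_composition_def)
  have expand: "Poly_Mapping.lookup (Mpoly k N (e # b)) (consecutive_monomial k a) = (\<Sum>i\<in>{k..<N}. ?term i)"
    by (simp add: lookup_sum)
  show ?case
  proof (cases "\<exists>a'. a = e # a'")
    case False
    have "?term i = 0" if "i \<in> {k..<N}" for i
      using lookup_Mpoly_summand_consecutive_monomial[OF Cons.prems(1) \<open>e > 0\<close>] that False by force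
    then show ?thesis
      using False expand by auto
  next
    case True
    then obtain a' where a: "a = e # a'" ..
    have "?term i = 0" if "i \<in> {k..<N} - {k}" for i
      using lookup_Mpoly_summand_consecutive_monomial[OF Cons.prems(1) \<open>e > 0\<close>] that by force
    then have "(\<Sum>i\<in>{k..<N}. ?term i) = ?term k"
      using Cons.prems(3) a by (subst sum.remove[of _ k]) auto
    also have "\<dots> = Poly_Mapping.lookup (Mpoly (Suc k) N b) (consecutive_monomial (Suc k) a')"
      by (simp add: a lookup_Xpow_mult)
    also have "\<dots> = (if a' = b then 1 else 0)"
      using Cons.IH[of a' "Suc k"] Cons.prems(1,3) \<open>is_composition b\<close> a
      by (simp add: is_composition_def)
    finally show ?thesis
      using expand a by simp
  qed
qed

lemma lookup_qsym_eval_consecutive_monomial: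
  assumes "in_QSymm y" "is_composition a" "length a \<le> N"
  shows "Poly_Mapping.lookup (qsym_eval 0 N y) (consecutive_monomial 0 a) = Poly_Mapping.lookup y a"
proof -
  have "Poly_Mapping.lookup (qsym_eval 0 N y) (consecutive_monomial 0 a)
      = (\<Sum>b\<in>Poly_Mapping.keys y. if b = a then Poly_Mapping.lookup y b else 0)"
    unfolding qsym_eval_def lookup_frag_extend
    using assms by (intro sum.cong) (auto simp: lookup_Mpoly_consecutive_monomial in_QSymm_def)
  also have "\<dots> = Poly_Mapping.lookup y a"
    by (simp add: sum.delta' in_keys_iff)
  finally show ?thesis .
qed

section \<open>The Frobenius endomorphisms\<close>

lemma frob_add: "frob n (x + y) = frob n x + frob n y"
  by (simp add: frob_def frag_extend_add)

lemma frob_cmul: "frob n (frag_cmul c x) = frag_cmul c (frob n x)"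
  by (simp add: frob_def frag_extend_cmul)

lemma frob_qone: "frob n qone = qone"
  by (simp add: frob_def qone_def)

lemma frob_1: "frob 1 x = x"
  by (simp add: frob_def flip: frag_expansion)

lemma frob_frob: "frob n (frob m x) = frob (n * m) x"
  by (simp add: frob_def frag_extend_frag_extend mult.assoc comp_def)

lemma frob_psum: "frob n (psum k) = psum (n * k)"
  by (simp add: frob_def psum_def)

lemma frob_Cons:
  "frob n (frag_extend (\<lambda>c. frag_of (e # c)) z) = frag_extend (\<lambda>c. frag_of (n * e # c)) (frob n z)"
  by (simp add: frob_def frag_extend_frag_extend)

lemma frob_qshuffle: "frob n (qshuffle a b) = qshuffle (map ((*) n) a) (map ((*) n) b)"
proof (induction a b rule: qshuffle.induct)
  case (3 x a y b)
  then show ?case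
    by (simp only: qshuffle.simps list.map frob_add frob_Cons add_mult_distrib2)
qed (simp_all add: frob_def)

lemma frob_qmult: "frob n (qmult x y) = qmult (frob n x) (frob n y)"
  unfolding qmult_def frob_def by (simp add: frag_extend_frag_extend frob_qshuffle[unfolded frob_def])

lemma frob_qcoprod: "qcoprod (frob n x) = tensor_map (frob n) (qcoprod x)"
  unfolding qcoprod_def tensor_map_def
  by (simp add: frob_def frag_extend_frag_extend frag_extend_sum qtensor_def take_map drop_map comp_def)

lemma lookup_frob_scaled:
  assumes "\<And>c. map ((*) n) c = map ((*) n) a \<Longrightarrow> c = a"
  shows "Poly_Mapping.lookup (frob n x) (map ((*) n) a) = Poly_Mapping.lookup x a"
proof -
  have "Poly_Mapping.lookup (frob n x) (map ((*) n) a)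
      = (\<Sum>c\<in>Poly_Mapping.keys x. if c = a then Poly_Mapping.lookup x c else 0)"
    unfolding frob_def lookup_frag_extend using assms by (intro sum.cong) auto
  also have "\<dots> = Poly_Mapping.lookup x a"
    by (simp add: sum.delta' in_keys_iff)
  finally show ?thesis .
qed

lemma lookup_frob_unscaled:
  "b \<notin> range (map ((*) n)) \<Longrightarrow> Poly_Mapping.lookup (frob n x) b = 0"
  unfolding frob_def lookup_frag_extend by (intro sum.neutral) auto

lemma frob_qcounit: "qcounit (frob n x) = qcounit x"
  using lookup_frob_scaled[of n "[]" x] by (simp add: qcounit_def)

lemma in_QSymm_frob: "n \<ge> 1 \<Longrightarrow> in_QSymm x \<Longrightarrow> in_QSymm (frob n x)"
  unfolding frob_def
  by (intro in_QSymm_frag_extend) (auto simp: in_QSymm_def is_composition_def)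

lemma hopf_endo_frob: "n \<ge> 1 \<Longrightarrow> hopf_endo (frob n)"
  unfolding hopf_endo_def
  by (simp add: in_QSymm_frob frob_add frob_cmul frob_qone frob_qmult frob_qcoprod frob_qcounit)

lemma map_scale_eq_iff: "(n::nat) \<ge> 1 \<Longrightarrow> map ((*) n) a = map ((*) n) b \<longleftrightarrow> a = b"
  by (simp add: inj_on_def inj_map_eq_map)

lemma mset_eq_scaled:
  assumes "(n::nat) \<ge> 1" "mset (map ((*) n) c) = mset b"
  obtains d where "b = map ((*) n) d" "mset c = mset d"
proof
  let ?d = "map (\<lambda>t. t div n) b"
  have "set b = (*) n ` set c"
    using assms(2) by (metis set_map set_mset_mset)
  then show "b = map ((*) n) ?d"
    unfolding map_map by (intro map_idI[symmetric]) auto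
  have "mset c = mset (map (\<lambda>t. t div n) (map ((*) n) c))"
    using assms(1) by (simp add: map_idI)
  also have "\<dots> = mset ?d"
    by (metis assms(2) mset_map)
  finally show "mset c = mset ?d" .
qed

lemma in_Symm_frob:
  assumes "n \<ge> 1" "in_Symm x"
  shows "in_Symm (frob n x)"
  unfolding in_Symm_def
proof (intro conjI allI impI)
  show "in_QSymm (frob n x)"
    using assms in_QSymm_frob by (auto simp: in_Symm_def)
next
  fix a b :: "nat list"
  assume ab: "mset a = mset b"
  have scaled: "Poly_Mapping.lookup (frob n x) (map ((*) n) c) = Poly_Mapping.lookup (frob n x) b'"
    if eq: "mset (map ((*) n) c) = mset b'" for c b'
  proof -
    obtain d where d: "b' = map ((*) n) d" "mset c = mset d"
      using mset_eq_scaled[OF assms(1) eq] .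
    have "Poly_Mapping.lookup (frob n x) (map ((*) n) e) = Poly_Mapping.lookup x e" for e
      by (rule lookup_frob_scaled) (simp add: map_scale_eq_iff[OF assms(1)])
    moreover have "Poly_Mapping.lookup x c = Poly_Mapping.lookup x d"
      using assms(2) d(2) unfolding in_Symm_def by blast
    ultimately show ?thesis
      using d(1) by simp
  qed
  show "Poly_Mapping.lookup (frob n x) a = Poly_Mapping.lookup (frob n x) b"
  proof (cases "a \<in> range (map ((*) n)) \<or> b \<in> range (map ((*) n))")
    case True
    then consider c where "a = map ((*) n) c" | c where "b = map ((*) n) c"
      by blast
    then show ?thesis
    proof cases
      case 1
      then show ?thesis
        using scaled[of c b] ab by simp
    next
      case 2
      then show ?thesis
        using scaled[of c a] ab by simp
    qed
  next
    case False
    then show ?thesis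
      by (simp add: lookup_frob_unscaled)
  qed
qed

lemma lookup_of_nat_mult:
  "Poly_Mapping.lookup (of_nat p * h :: mpoly) m = int p * Poly_Mapping.lookup h m"
  by (simp flip: single_of_nat mult_map_scale_conv_mult add: map.rep_eq when_def)

lemma frob_prime_cong:
  assumes p: "prime p" and x: "in_QSymm x"
  shows "divisible_by p (frob p x - qpow x p)"
  unfolding divisible_by_def
proof
  fix a
  define y where "y = frob p x - qpow x p"
  have "in_QSymm y"
    unfolding y_def using p x prime_gt_0_nat[OF p]
    by (intro in_QSymm_diff in_QSymm_frob in_QSymm_qpow) auto
  show "int p dvd Poly_Mapping.lookup (frob p x - qpow x p) a"
  proof (cases "is_composition a")
    case False
    then show ?thesis
      using \<open>in_QSymm y\<close> by (auto simp: y_def in_QSymm_def in_keys_iff)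
  next
    case True
    have "ring_cong p (qsym_eval 0 (length a) (frob p x)) (qsym_eval 0 (length a) (qpow x p))"
      using qsym_eval_frob_cong[OF p] by (simp add: qsym_eval_qpow)
    then obtain h where h: "qsym_eval 0 (length a) y = of_nat p * h"
      unfolding ring_cong_def y_def qsym_eval_diff by blast
    have "Poly_Mapping.lookup y a = Poly_Mapping.lookup (qsym_eval 0 (length a) y) (consecutive_monomial 0 a)"
      using lookup_qsym_eval_consecutive_monomial[OF \<open>in_QSymm y\<close> True] by simp
    also have "\<dots> = int p * Poly_Mapping.lookup h (consecutive_monomial 0 a)"
      by (simp add: h lookup_of_nat_mult)
    finally show ?thesis
      by (simp add: y_def)
  qed
qed

theorem mainTheorem6:
  shows "(\<forall>n::nat. n \<ge> 1 \<longrightarrow> hopf_endo (frob n))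
   \<and> (\<forall>x. in_QSymm x \<longrightarrow> frob 1 x = x)
   \<and> (\<forall>n m x. n \<ge> 1 \<longrightarrow> m \<ge> 1 \<longrightarrow> in_QSymm x \<longrightarrow> frob n (frob m x) = frob (n * m) x)
   \<and> (\<forall>n x. n \<ge> 1 \<longrightarrow> in_Symm x \<longrightarrow> in_Symm (frob n x))
   \<and> (\<forall>n k. n \<ge> 1 \<longrightarrow> k \<ge> 1 \<longrightarrow> frob n (psum k) = psum (n * k))
   \<and> (\<forall>p x. prime p \<longrightarrow> in_QSymm x \<longrightarrow> divisible_by p (frob p x - qpow x p))"
  by (intro conjI allI impI hopf_endo_frob frob_1 frob_frob in_Symm_frob frob_psum frob_prime_cong)

end
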